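(* Let $m$ be a positive integer. The bra-ket $\mathcal R$-dioid $C_m$ is isomorphic, as a Kleene algebra, to its matrix Kleene algebra $\mathrm{Mat}_{m\times m}(C_m)$.
   Context: An $\mathcal R$-dioid is a dioid in which every regular subset $A$ of its multiplicative monoid has a least upper bound $\sum A$ with $\sum(AB)=(\sum A)(\sum B)$; equivalently a $*$-continuous Kleene algebra. An $\mathcal R$-congruence is a semiring congruence $\rho$ such that regular sets with equal downward closures modulo $\rho$ have congruent suprema. Let $\Delta_m=\{p_0,\dots,p_{m-1},q_0,\dots,q_{m-1}\}$ and $\mathcal R\Delta_m^*$ the algebra of regular languages over $\Delta_m$ (union, concatenation, star). The bra-ket $\mathcal R$-dioid is $C_m=\mathcal R\Delta_m^*/\rho_m$, where $\rho_m$ is the least $\mathcal R$-congruence containing $p_iq_j=\delta_{i,j}$ for $i,j<m$ and $q_0p_0+\dots+q_{m-1}p_{m-1}=1$. $\mathrm{Mat}_{m\times m}(C_m)$ carries matrix sum, product and the standard matrix star. *)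

theory Defs
  imports Main
begin

datatype bk = P nat | Q nat

type_synonym lang = "bk list set"

definition lconc :: "lang \<Rightarrow> lang \<Rightarrow> lang" where
  "lconc L1 L2 = {u @ v | u v. u \<in> L1 \<and> v \<in> L2}"

primrec lpow :: "lang \<Rightarrow> nat \<Rightarrow> lang" where
  "lpow L 0 = {[]}"
| "lpow L (Suc n) = lconc L (lpow L n)"

definition lstar :: "lang \<Rightarrow> lang" where
  "lstar L = (\<Union>n. lpow L n)"

inductive regl :: "nat \<Rightarrow> lang \<Rightarrow> bool" for m where
  regl_empty: "regl m {}"
| regl_eps: "regl m {[]}"
| regl_P: "i < m \<Longrightarrow> regl m {[P i]}"
| regl_Q: "i < m \<Longrightarrow> regl m {[Q i]}"
| regl_union: "regl m A \<Longrightarrow> regl m B \<Longrightarrow> regl m (A \<union> B)"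
| regl_conc: "regl m A \<Longrightarrow> regl m B \<Longrightarrow> regl m (lconc A B)"
| regl_star: "regl m A \<Longrightarrow> regl m (lstar A)"

definition RD :: "nat \<Rightarrow> lang set" where
  "RD m = {L. regl m L}"

definition setprod :: "lang set \<Rightarrow> lang set \<Rightarrow> lang set" where
  "setprod A B = {lconc a b | a b. a \<in> A \<and> b \<in> B}"

primrec setpow :: "lang set \<Rightarrow> nat \<Rightarrow> lang set" where
  "setpow A 0 = {{[]}}"
| "setpow A (Suc n) = setprod A (setpow A n)"

definition setstar :: "lang set \<Rightarrow> lang set" where
  "setstar A = (\<Union>n. setpow A n)"

inductive ratsub :: "nat \<Rightarrow> lang set \<Rightarrow> bool" for m where
  ratsub_fin: "finite A \<Longrightarrow> A \<subseteq> RD m \<Longrightarrow> ratsub m A"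
| ratsub_union: "ratsub m A \<Longrightarrow> ratsub m B \<Longrightarrow> ratsub m (A \<union> B)"
| ratsub_prod: "ratsub m A \<Longrightarrow> ratsub m B \<Longrightarrow> ratsub m (setprod A B)"
| ratsub_star: "ratsub m A \<Longrightarrow> ratsub m (setstar A)"

text \<open>Downward closure of the image of A in the quotient by rho
  (quotient order: [x] <= [a] iff [x] + [a] = [a]).\<close>
definition dclos :: "nat \<Rightarrow> (lang \<times> lang) set \<Rightarrow> lang set \<Rightarrow> lang set set" where
  "dclos m \<rho> A = {\<rho> `` {x} | x. x \<in> RD m \<and> (\<exists>a\<in>A. (x \<union> a, a) \<in> \<rho>)}"

definition Rcong :: "nat \<Rightarrow> (lang \<times> lang) set \<Rightarrow> bool" where
  "Rcong m \<rho> \<longleftrightarrow>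
     \<rho> \<subseteq> RD m \<times> RD m \<and> equiv (RD m) \<rho> \<and>
     (\<forall>a b c d. (a, b) \<in> \<rho> \<longrightarrow> (c, d) \<in> \<rho> \<longrightarrow>
        (a \<union> c, b \<union> d) \<in> \<rho> \<and> (lconc a c, lconc b d) \<in> \<rho>) \<and>
     (\<forall>A B. ratsub m A \<longrightarrow> ratsub m B \<longrightarrow> dclos m \<rho> A = dclos m \<rho> B \<longrightarrow>
        (\<Union>A, \<Union>B) \<in> \<rho>)"

text \<open>Generating relations: p_i q_j = delta_ij and sum_i q_i p_i = 1.\<close>
definition gens :: "nat \<Rightarrow> (lang \<times> lang) set" where
  "gens m = {({[P i, Q j]}, if i = j then {[]} else {}) | i j. i < m \<and> j < m}
            \<union> {({[Q i, P i] | i. i < m}, {[]})}"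

definition rho :: "nat \<Rightarrow> (lang \<times> lang) set" where
  "rho m = \<Inter>{\<rho>. Rcong m \<rho> \<and> gens m \<subseteq> \<rho>}"

type_synonym cls = "lang set"

definition C :: "nat \<Rightarrow> cls set" where
  "C m = RD m // rho m"

definition czero :: "nat \<Rightarrow> cls" where "czero m = rho m `` {{}}"
definition cone :: "nat \<Rightarrow> cls" where "cone m = rho m `` {{[]}}"
definition cadd :: "nat \<Rightarrow> cls \<Rightarrow> cls \<Rightarrow> cls" where
  "cadd m X Y = (\<Union>x\<in>X. \<Union>y\<in>Y. rho m `` {x \<union> y})"
definition cmul :: "nat \<Rightarrow> cls \<Rightarrow> cls \<Rightarrow> cls" where
  "cmul m X Y = (\<Union>x\<in>X. \<Union>y\<in>Y. rho m `` {lconc x y})"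
definition cstar :: "nat \<Rightarrow> cls \<Rightarrow> cls" where
  "cstar m X = (\<Union>x\<in>X. rho m `` {lstar x})"

primrec gsum :: "('a \<Rightarrow> 'a \<Rightarrow> 'a) \<Rightarrow> 'a \<Rightarrow> (nat \<Rightarrow> 'a) \<Rightarrow> nat \<Rightarrow> 'a" where
  "gsum pl z f 0 = z"
| "gsum pl z f (Suc n) = pl (gsum pl z f n) (f n)"

text \<open>Standard recursive matrix star for an n x n matrix: split
  M = [[a, b], [c, D]] with a of size 1x1, f = a + b D* c, and
  M* = [[f*, f* b D*], [D* c f*, D* + D* c f* b D*]].\<close>
fun gstar :: "('a \<Rightarrow> 'a \<Rightarrow> 'a) \<Rightarrow> ('a \<Rightarrow> 'a \<Rightarrow> 'a) \<Rightarrow> ('a \<Rightarrow> 'a) \<Rightarrow> 'a \<Rightarrow> nat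
              \<Rightarrow> (nat \<Rightarrow> nat \<Rightarrow> 'a) \<Rightarrow> nat \<Rightarrow> nat \<Rightarrow> 'a" where
  "gstar pl ml st z 0 M = (\<lambda>i j. z)"
| "gstar pl ml st z (Suc n) M =
    (let a = M 0 0;
         b = (\<lambda>j. M 0 (Suc j));
         c = (\<lambda>i. M (Suc i) 0);
         D = (\<lambda>i j. M (Suc i) (Suc j));
         Ds = gstar pl ml st z n D;
         bD = (\<lambda>j. gsum pl z (\<lambda>k. ml (b k) (Ds k j)) n);
         Dc = (\<lambda>i. gsum pl z (\<lambda>k. ml (Ds i k) (c k)) n);
         f = pl a (gsum pl z (\<lambda>k. ml (bD k) (c k)) n);
         fs = st f
     in (\<lambda>i j. if i = 0 then (if j = 0 then fs else ml fs (bD (j - 1)))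
              else (if j = 0 then ml (Dc (i - 1)) fs
                    else pl (Ds (i - 1) (j - 1)) (ml (ml (Dc (i - 1)) fs) (bD (j - 1))))))"

type_synonym cmat = "nat \<Rightarrow> nat \<Rightarrow> cls"

definition mext :: "nat \<Rightarrow> cmat \<Rightarrow> cmat" where
  "mext m M = (\<lambda>i j. if i < m \<and> j < m then M i j else {})"

definition MatC :: "nat \<Rightarrow> cmat set" where
  "MatC m = {M. (\<forall>i<m. \<forall>j<m. M i j \<in> C m) \<and> (\<forall>i j. \<not> (i < m \<and> j < m) \<longrightarrow> M i j = {})}"

definition mzero :: "nat \<Rightarrow> cmat" where
  "mzero m = mext m (\<lambda>i j. czero m)"
definition mone :: "nat \<Rightarrow> cmat" where
  "mone m = mext m (\<lambda>i j. if i = j then cone m else czero m)"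
definition madd :: "nat \<Rightarrow> cmat \<Rightarrow> cmat \<Rightarrow> cmat" where
  "madd m M N = mext m (\<lambda>i j. cadd m (M i j) (N i j))"
definition mmul :: "nat \<Rightarrow> cmat \<Rightarrow> cmat \<Rightarrow> cmat" where
  "mmul m M N = mext m (\<lambda>i j. gsum (cadd m) (czero m) (\<lambda>k. cmul m (M i k) (N k j)) m)"
definition mstar :: "nat \<Rightarrow> cmat \<Rightarrow> cmat" where
  "mstar m M = mext m (gstar (cadd m) (cmul m) (cstar m) (czero m) m M)"

definition KA_iso :: "nat \<Rightarrow> (cls \<Rightarrow> cmat) \<Rightarrow> bool" where
  "KA_iso m h \<longleftrightarrow> bij_betw h (C m) (MatC m) \<and>
     h (czero m) = mzero m \<and> h (cone m) = mone m \<and>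
     (\<forall>x\<in>C m. \<forall>y\<in>C m. h (cadd m x y) = madd m (h x) (h y)
                      \<and> h (cmul m x y) = mmul m (h x) (h y)) \<and>
     (\<forall>x\<in>C m. h (cstar m x) = mstar m (h x))"

end

theory Submission
  imports Defs
begin

(*
  By the defining relations the classes p_i, q_j of the letters satisfy p_i q_j = delta_ij and
  q_0 p_0 + ... + q_(m-1) p_(m-1) = 1, i.e. they behave like matrix units. Hence
  x |-> (p_i x q_j)_ij is a bijection from C_m onto the m x m matrices over C_m, with inverse
  M |-> sum_ij q_i M_ij p_j, and it preserves 0, 1, + and the product.

  Star is preserved for free: in C_m (a quotient by an R-congruence, hence a Kleene algebra) x* is
  the least s with 1 + x s <= s, and the Conway block formula defining the matrix star also yields
  the least solution of 1 + M S <= S; the latter holds over any left Kleene algebra, by induction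
  on the size, splitting off the first row and column. An isomorphism of ordered semirings maps
  least solutions to least solutions.
*)

definition block :: "'a \<Rightarrow> (nat \<Rightarrow> 'a) \<Rightarrow> (nat \<Rightarrow> 'a) \<Rightarrow> (nat \<Rightarrow> nat \<Rightarrow> 'a) \<Rightarrow> nat \<Rightarrow> nat \<Rightarrow> 'a" where
  "block a b c D i j =
    (case (i, j) of (0, 0) \<Rightarrow> a | (0, Suc j) \<Rightarrow> b j | (Suc i, 0) \<Rightarrow> c i | (Suc i, Suc j) \<Rightarrow> D i j)"

lemma block_simps [simp]:
  "block a b c D 0 0 = a" "block a b c D 0 (Suc j) = b j"
  "block a b c D (Suc i) 0 = c i" "block a b c D (Suc i) (Suc j) = D i j"
  by (simp_all add: block_def)

lemma block_eta: "block (M 0 0) (\<lambda>j. M 0 (Suc j)) (\<lambda>i. M (Suc i) 0) (\<lambda>i j. M (Suc i) (Suc j)) = M"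
  by (simp add: block_def fun_eq_iff split: nat.split)

lemma gsum_cong: "(\<And>k. k < n \<Longrightarrow> f k = g k) \<Longrightarrow> gsum p z f n = gsum p z g n"
  by (induction n) auto

lemma gsum_cong_simp [cong]:
  "n = n' \<Longrightarrow> (\<And>k. k < n' =simp=> f k = g k) \<Longrightarrow> gsum p z f n = gsum p z g n'"
  unfolding simp_implies_def by (auto intro: gsum_cong)

locale left_kleene_algebra_on =
  fixes K :: "'a set"
    and add :: "'a \<Rightarrow> 'a \<Rightarrow> 'a" (infixl "\<oplus>" 65)
    and mul :: "'a \<Rightarrow> 'a \<Rightarrow> 'a" (infixl "\<otimes>" 70)
    and star :: "'a \<Rightarrow> 'a"
    and zero :: 'a ("\<zero>")
    and one :: 'a ("\<one>")
  assumes zero_closed [simp]: "\<zero> \<in> K"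
    and one_closed [simp]: "\<one> \<in> K"
    and add_closed [simp]: "x \<in> K \<Longrightarrow> y \<in> K \<Longrightarrow> x \<oplus> y \<in> K"
    and mul_closed [simp]: "x \<in> K \<Longrightarrow> y \<in> K \<Longrightarrow> x \<otimes> y \<in> K"
    and star_closed [simp]: "x \<in> K \<Longrightarrow> star x \<in> K"
    and add_assoc: "x \<in> K \<Longrightarrow> y \<in> K \<Longrightarrow> w \<in> K \<Longrightarrow> x \<oplus> y \<oplus> w = x \<oplus> (y \<oplus> w)"
    and add_commute: "x \<in> K \<Longrightarrow> y \<in> K \<Longrightarrow> x \<oplus> y = y \<oplus> x"
    and add_idem [simp]: "x \<in> K \<Longrightarrow> x \<oplus> x = x"
    and add_zero_left [simp]: "x \<in> K \<Longrightarrow> \<zero> \<oplus> x = x"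
    and mul_assoc: "x \<in> K \<Longrightarrow> y \<in> K \<Longrightarrow> w \<in> K \<Longrightarrow> x \<otimes> y \<otimes> w = x \<otimes> (y \<otimes> w)"
    and mul_one_left [simp]: "x \<in> K \<Longrightarrow> \<one> \<otimes> x = x"
    and mul_one_right [simp]: "x \<in> K \<Longrightarrow> x \<otimes> \<one> = x"
    and mul_zero_left [simp]: "x \<in> K \<Longrightarrow> \<zero> \<otimes> x = \<zero>"
    and mul_zero_right [simp]: "x \<in> K \<Longrightarrow> x \<otimes> \<zero> = \<zero>"
    and distrib_left: "x \<in> K \<Longrightarrow> y \<in> K \<Longrightarrow> w \<in> K \<Longrightarrow> x \<otimes> (y \<oplus> w) = x \<otimes> y \<oplus> x \<otimes> w"
    and distrib_right: "x \<in> K \<Longrightarrow> y \<in> K \<Longrightarrow> w \<in> K \<Longrightarrow> (y \<oplus> w) \<otimes> x = y \<otimes> x \<oplus> w \<otimes> x"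
    and star_unfold: "x \<in> K \<Longrightarrow> \<one> \<oplus> x \<otimes> star x \<oplus> star x = star x"
    and star_induct: "x \<in> K \<Longrightarrow> y \<in> K \<Longrightarrow> x \<otimes> y \<oplus> y = y \<Longrightarrow> star x \<otimes> y \<oplus> y = y"
begin

lemma add_zero_right [simp]: "x \<in> K \<Longrightarrow> x \<oplus> \<zero> = x"
  using add_commute[of x \<zero>] by simp

lemma add_left_commute: "x \<in> K \<Longrightarrow> y \<in> K \<Longrightarrow> w \<in> K \<Longrightarrow> x \<oplus> (y \<oplus> w) = y \<oplus> (x \<oplus> w)"
  by (metis add_assoc add_commute)

lemmas add_ac = add_assoc add_commute add_left_commute

definition leq :: "'a \<Rightarrow> 'a \<Rightarrow> bool" (infix "\<preceq>" 50) where
  "x \<preceq> y \<longleftrightarrow> x \<oplus> y = y"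

lemma leq_refl [simp]: "x \<in> K \<Longrightarrow> x \<preceq> x"
  by (simp add: leq_def)

lemma leq_trans: "x \<preceq> y \<Longrightarrow> y \<preceq> w \<Longrightarrow> x \<in> K \<Longrightarrow> y \<in> K \<Longrightarrow> w \<in> K \<Longrightarrow> x \<preceq> w"
  unfolding leq_def by (metis add_assoc)

lemma eq_leq_trans [trans]: "x = y \<Longrightarrow> y \<preceq> w \<Longrightarrow> x \<preceq> w"
  by simp

lemma leq_antisym: "x \<preceq> y \<Longrightarrow> y \<preceq> x \<Longrightarrow> x \<in> K \<Longrightarrow> y \<in> K \<Longrightarrow> x = y"
  unfolding leq_def by (metis add_commute)

lemma zero_leq [simp]: "x \<in> K \<Longrightarrow> \<zero> \<preceq> x"
  by (simp add: leq_def)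

lemma add_leq_iff: "x \<in> K \<Longrightarrow> y \<in> K \<Longrightarrow> w \<in> K \<Longrightarrow> x \<oplus> y \<preceq> w \<longleftrightarrow> x \<preceq> w \<and> y \<preceq> w"
  unfolding leq_def by (metis add_assoc add_commute add_idem add_closed)

lemma leq_add_left: "x \<in> K \<Longrightarrow> y \<in> K \<Longrightarrow> x \<preceq> x \<oplus> y"
  unfolding leq_def by (metis add_assoc add_idem)

lemma leq_add_right: "x \<in> K \<Longrightarrow> y \<in> K \<Longrightarrow> y \<preceq> x \<oplus> y"
  using leq_add_left add_commute by metis

lemma add_mono:
  "x \<preceq> x' \<Longrightarrow> y \<preceq> y' \<Longrightarrow> x \<in> K \<Longrightarrow> y \<in> K \<Longrightarrow> x' \<in> K \<Longrightarrow> y' \<in> K \<Longrightarrow> x \<oplus> y \<preceq> x' \<oplus> y'"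
  by (meson leq_add_left leq_add_right leq_trans add_leq_iff add_closed)

lemma mul_mono_left: "x \<preceq> x' \<Longrightarrow> x \<in> K \<Longrightarrow> x' \<in> K \<Longrightarrow> y \<in> K \<Longrightarrow> x \<otimes> y \<preceq> x' \<otimes> y"
  unfolding leq_def by (metis distrib_right)

lemma mul_mono_right: "y \<preceq> y' \<Longrightarrow> x \<in> K \<Longrightarrow> y \<in> K \<Longrightarrow> y' \<in> K \<Longrightarrow> x \<otimes> y \<preceq> x \<otimes> y'"
  unfolding leq_def by (metis distrib_left)

lemma star_unfold_leq: "x \<in> K \<Longrightarrow> \<one> \<oplus> x \<otimes> star x \<preceq> star x"
  unfolding leq_def by (rule star_unfold)

lemma star_induct_leq: "x \<in> K \<Longrightarrow> y \<in> K \<Longrightarrow> x \<otimes> y \<preceq> y \<Longrightarrow> star x \<otimes> y \<preceq> y"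
  unfolding leq_def by (rule star_induct)

lemma star_least: "x \<in> K \<Longrightarrow> s \<in> K \<Longrightarrow> \<one> \<oplus> x \<otimes> s \<preceq> s \<Longrightarrow> star x \<preceq> s"
proof -
  assume x: "x \<in> K" and s: "s \<in> K" and "\<one> \<oplus> x \<otimes> s \<preceq> s"
  then have one: "\<one> \<preceq> s" and "x \<otimes> s \<preceq> s"
    by (auto simp: add_leq_iff)
  then have "star x \<otimes> s \<preceq> s"
    using x s by (intro star_induct_leq)
  moreover have "star x \<otimes> \<one> \<preceq> star x \<otimes> s"
    using one x s by (intro mul_mono_right) auto
  ultimately show ?thesis
    using x s by (metis leq_trans mul_one_right one_closed mul_closed star_closed)
qed

abbreviation ksum :: "(nat \<Rightarrow> 'a) \<Rightarrow> nat \<Rightarrow> 'a" where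
  "ksum f n \<equiv> gsum (\<oplus>) \<zero> f n"

lemma gsum_closed [simp]: "(\<And>k. k < n \<Longrightarrow> f k \<in> K) \<Longrightarrow> ksum f n \<in> K"
  by (induction n) auto

lemma gsum_zero [simp]: "ksum (\<lambda>k. \<zero>) n = \<zero>"
  by (induction n) auto

lemma gsum_add:
  "(\<And>k. k < n \<Longrightarrow> f k \<in> K) \<Longrightarrow> (\<And>k. k < n \<Longrightarrow> g k \<in> K) \<Longrightarrow>
   ksum (\<lambda>k. f k \<oplus> g k) n = ksum f n \<oplus> ksum g n"
  by (induction n) (simp_all add: add_ac)

lemma gsum_mul_left:
  "(\<And>k. k < n \<Longrightarrow> f k \<in> K) \<Longrightarrow> x \<in> K \<Longrightarrow> x \<otimes> ksum f n = ksum (\<lambda>k. x \<otimes> f k) n"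
  by (induction n) (auto simp: distrib_left)

lemma gsum_mul_right:
  "(\<And>k. k < n \<Longrightarrow> f k \<in> K) \<Longrightarrow> x \<in> K \<Longrightarrow> ksum f n \<otimes> x = ksum (\<lambda>k. f k \<otimes> x) n"
  by (induction n) (auto simp: distrib_right)

lemma gsum_Suc_first:
  "(\<And>k. k < Suc n \<Longrightarrow> f k \<in> K) \<Longrightarrow> ksum f (Suc n) = f 0 \<oplus> ksum (\<lambda>k. f (Suc k)) n"
  by (induction n) (simp_all add: add_ac)

lemma gsum_swap:
  "(\<And>i j. i < n \<Longrightarrow> j < p \<Longrightarrow> f i j \<in> K) \<Longrightarrow>
   ksum (\<lambda>i. ksum (\<lambda>j. f i j) p) n = ksum (\<lambda>j. ksum (\<lambda>i. f i j) n) p"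
  by (induction n) (simp_all add: gsum_add)

lemma gsum_delta: "j < n \<Longrightarrow> x \<in> K \<Longrightarrow> ksum (\<lambda>k. if k = j then x else \<zero>) n = x"
proof (induction n)
  case (Suc n)
  then show ?case
    by (cases "j = n") (simp_all add: gsum_cong[where g = "\<lambda>k. \<zero>"])
qed simp

lemma gsum_upper: "(\<And>k. k < n \<Longrightarrow> f k \<in> K) \<Longrightarrow> j < n \<Longrightarrow> f j \<preceq> ksum f n"
proof (induction n)
  case (Suc n)
  then show ?case
    by (cases "j = n") (auto simp: leq_add_right intro: leq_trans[OF _ leq_add_left])
qed simp

lemma gsum_mono:
  "(\<And>k. k < n \<Longrightarrow> f k \<in> K) \<Longrightarrow> (\<And>k. k < n \<Longrightarrow> g k \<in> K) \<Longrightarrow>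
   (\<And>k. k < n \<Longrightarrow> f k \<preceq> g k) \<Longrightarrow> ksum f n \<preceq> ksum g n"
  by (induction n) (auto intro: add_mono)

definition dot :: "nat \<Rightarrow> (nat \<Rightarrow> 'a) \<Rightarrow> (nat \<Rightarrow> 'a) \<Rightarrow> 'a" where
  "dot n u v = ksum (\<lambda>k. u k \<otimes> v k) n"

lemma dot_closed [simp]:
  "(\<And>k. k < n \<Longrightarrow> u k \<in> K) \<Longrightarrow> (\<And>k. k < n \<Longrightarrow> v k \<in> K) \<Longrightarrow> dot n u v \<in> K"
  by (simp add: dot_def)

lemma dot_cong:
  "(\<And>k. k < n \<Longrightarrow> u k = u' k) \<Longrightarrow> (\<And>k. k < n \<Longrightarrow> v k = v' k) \<Longrightarrow> dot n u v = dot n u' v'"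
  unfolding dot_def by (rule gsum_cong) simp

lemma dot_Suc:
  "(\<And>k. k < Suc n \<Longrightarrow> u k \<in> K) \<Longrightarrow> (\<And>k. k < Suc n \<Longrightarrow> v k \<in> K) \<Longrightarrow>
   dot (Suc n) u v = u 0 \<otimes> v 0 \<oplus> dot n (\<lambda>k. u (Suc k)) (\<lambda>k. v (Suc k))"
  unfolding dot_def by (subst gsum_Suc_first) auto

lemma dot_add_right:
  "(\<And>k. k < n \<Longrightarrow> u k \<in> K) \<Longrightarrow> (\<And>k. k < n \<Longrightarrow> v k \<in> K) \<Longrightarrow> (\<And>k. k < n \<Longrightarrow> w k \<in> K) \<Longrightarrow>
   dot n u (\<lambda>k. v k \<oplus> w k) = dot n u v \<oplus> dot n u w"
  unfolding dot_def by (simp add: distrib_left gsum_add)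

lemma dot_add_left:
  "(\<And>k. k < n \<Longrightarrow> u k \<in> K) \<Longrightarrow> (\<And>k. k < n \<Longrightarrow> u' k \<in> K) \<Longrightarrow> (\<And>k. k < n \<Longrightarrow> v k \<in> K) \<Longrightarrow>
   dot n (\<lambda>k. u k \<oplus> u' k) v = dot n u v \<oplus> dot n u' v"
  unfolding dot_def by (simp add: distrib_right gsum_add)

lemma dot_mul_left:
  "(\<And>k. k < n \<Longrightarrow> u k \<in> K) \<Longrightarrow> (\<And>k. k < n \<Longrightarrow> v k \<in> K) \<Longrightarrow> x \<in> K \<Longrightarrow>
   dot n (\<lambda>k. x \<otimes> u k) v = x \<otimes> dot n u v"
  unfolding dot_def by (simp add: gsum_mul_left mul_assoc)

lemma dot_mul_right:
  "(\<And>k. k < n \<Longrightarrow> u k \<in> K) \<Longrightarrow> (\<And>k. k < n \<Longrightarrow> v k \<in> K) \<Longrightarrow> x \<in> K \<Longrightarrow>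
   dot n u (\<lambda>k. v k \<otimes> x) = dot n u v \<otimes> x"
  unfolding dot_def by (simp add: gsum_mul_right mul_assoc)

lemma dot_assoc:
  "(\<And>k. k < n \<Longrightarrow> u k \<in> K) \<Longrightarrow> (\<And>k l. k < n \<Longrightarrow> l < p \<Longrightarrow> A k l \<in> K) \<Longrightarrow>
   (\<And>l. l < p \<Longrightarrow> v l \<in> K) \<Longrightarrow>
   dot n u (\<lambda>k. dot p (A k) v) = dot p (\<lambda>l. dot n u (\<lambda>k. A k l)) v"
  unfolding dot_def by (simp add: gsum_mul_left gsum_mul_right mul_assoc gsum_swap[of n p])

lemma dot_mono_right:
  "(\<And>k. k < n \<Longrightarrow> u k \<in> K) \<Longrightarrow> (\<And>k. k < n \<Longrightarrow> v k \<in> K) \<Longrightarrow> (\<And>k. k < n \<Longrightarrow> w k \<in> K) \<Longrightarrow>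
   (\<And>k. k < n \<Longrightarrow> v k \<preceq> w k) \<Longrightarrow> dot n u v \<preceq> dot n u w"
  unfolding dot_def by (rule gsum_mono) (auto intro: mul_mono_right)

lemma dot_mono_left:
  "(\<And>k. k < n \<Longrightarrow> u k \<in> K) \<Longrightarrow> (\<And>k. k < n \<Longrightarrow> u' k \<in> K) \<Longrightarrow> (\<And>k. k < n \<Longrightarrow> v k \<in> K) \<Longrightarrow>
   (\<And>k. k < n \<Longrightarrow> u k \<preceq> u' k) \<Longrightarrow> dot n u v \<preceq> dot n u' v"
  unfolding dot_def by (rule gsum_mono) (auto intro: mul_mono_left)

definition unit_mat :: "nat \<Rightarrow> nat \<Rightarrow> 'a" where
  "unit_mat i j = (if i = j then \<one> else \<zero>)"

lemma unit_mat_closed [simp]: "unit_mat i j \<in> K"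
  by (simp add: unit_mat_def)

lemma dot_unit_mat: "i < n \<Longrightarrow> (\<And>k. k < n \<Longrightarrow> v k \<in> K) \<Longrightarrow> dot n (unit_mat i) v = v i"
  unfolding dot_def unit_mat_def
  by (subst gsum_cong[where g = "\<lambda>k. if k = i then v i else \<zero>"]) (auto simp: gsum_delta)

lemma dot_unit_mat_right: "j < n \<Longrightarrow> (\<And>k. k < n \<Longrightarrow> u k \<in> K) \<Longrightarrow> dot n u (\<lambda>k. unit_mat k j) = u j"
  unfolding dot_def unit_mat_def
  by (subst gsum_cong[where g = "\<lambda>k. if k = j then u j else \<zero>"]) (auto simp: gsum_delta)

abbreviation mat_star :: "nat \<Rightarrow> (nat \<Rightarrow> nat \<Rightarrow> 'a) \<Rightarrow> nat \<Rightarrow> nat \<Rightarrow> 'a" where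
  "mat_star n M \<equiv> gstar (\<oplus>) (\<otimes>) star \<zero> n M"

definition block_star ::
  "nat \<Rightarrow> 'a \<Rightarrow> (nat \<Rightarrow> 'a) \<Rightarrow> (nat \<Rightarrow> 'a) \<Rightarrow> (nat \<Rightarrow> nat \<Rightarrow> 'a) \<Rightarrow> nat \<Rightarrow> nat \<Rightarrow> 'a" where
  "block_star n a b c S =
    (let bS = (\<lambda>j. dot n b (\<lambda>k. S k j)); Sc = (\<lambda>i. dot n (S i) c); f = star (a \<oplus> dot n bS c)
     in block f (\<lambda>j. f \<otimes> bS j) (\<lambda>i. Sc i \<otimes> f) (\<lambda>i j. S i j \<oplus> Sc i \<otimes> f \<otimes> bS j))"

lemma block_closed:
  "a \<in> K \<Longrightarrow> (\<And>k. k < n \<Longrightarrow> b k \<in> K) \<Longrightarrow> (\<And>k. k < n \<Longrightarrow> c k \<in> K) \<Longrightarrow>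
   (\<And>i j. i < n \<Longrightarrow> j < n \<Longrightarrow> D i j \<in> K) \<Longrightarrow> i < Suc n \<Longrightarrow> j < Suc n \<Longrightarrow> block a b c D i j \<in> K"
  by (cases i; cases j) auto

lemma mat_star_Suc:
  "mat_star (Suc n) M =
   block_star n (M 0 0) (\<lambda>j. M 0 (Suc j)) (\<lambda>i. M (Suc i) 0) (mat_star n (\<lambda>i j. M (Suc i) (Suc j)))"
  by (simp add: block_star_def block_def dot_def fun_eq_iff Let_def split: nat.split)

context
  fixes n :: nat and a :: 'a and b c :: "nat \<Rightarrow> 'a" and D S :: "nat \<Rightarrow> nat \<Rightarrow> 'a"
  assumes a_closed [simp]: "a \<in> K"
    and b_closed [simp]: "\<And>k. k < n \<Longrightarrow> b k \<in> K"
    and c_closed [simp]: "\<And>k. k < n \<Longrightarrow> c k \<in> K"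
    and D_closed [simp]: "\<And>i j. i < n \<Longrightarrow> j < n \<Longrightarrow> D i j \<in> K"
    and S_closed [simp]: "\<And>i j. i < n \<Longrightarrow> j < n \<Longrightarrow> S i j \<in> K"
begin

text \<open>With \<open>S = D\<^sup>*\<close> these are the blocks \<open>b D\<^sup>*\<close>, \<open>D\<^sup>* c\<close> and \<open>(a + b D\<^sup>* c)\<^sup>*\<close> of Conway's formula.\<close>

abbreviation (input) "bS \<equiv> \<lambda>j. dot n b (\<lambda>k. S k j)"
abbreviation (input) "Sc \<equiv> \<lambda>i. dot n (S i) c"
abbreviation (input) "fstar \<equiv> star (a \<oplus> dot n bS c)"

lemma block_star_eq:
  "block_star n a b c S = block fstar (\<lambda>j. fstar \<otimes> bS j) (\<lambda>i. Sc i \<otimes> fstar) (\<lambda>i j. S i j \<oplus> Sc i \<otimes> fstar \<otimes> bS j)"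
  by (simp add: block_star_def Let_def)

lemma block_entries_closed: "i < Suc n \<Longrightarrow> j < Suc n \<Longrightarrow> block a b c D i j \<in> K"
  by (rule block_closed) simp_all

lemma block_star_closed: "i < Suc n \<Longrightarrow> j < Suc n \<Longrightarrow> block_star n a b c S i j \<in> K"
  unfolding block_star_eq by (rule block_closed) simp_all

lemma dot_block_block_star:
  "i < Suc n \<Longrightarrow> j < Suc n \<Longrightarrow> dot (Suc n) (block a b c D i) (\<lambda>k. block_star n a b c S k j) =
   block a b c D i 0 \<otimes> block_star n a b c S 0 j \<oplus>
   dot n (\<lambda>k. block a b c D i (Suc k)) (\<lambda>k. block_star n a b c S (Suc k) j)"
  by (simp add: dot_Suc block_entries_closed block_star_closed)

lemma block_star_assoc: "dot n b Sc = dot n bS c"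
  by (rule dot_assoc) simp_all

context
  assumes unfold_S: "\<And>i j. i < n \<Longrightarrow> j < n \<Longrightarrow> unit_mat i j \<oplus> dot n (D i) (\<lambda>k. S k j) \<preceq> S i j"
begin

lemma block_star_unfold_column: "k < n \<Longrightarrow> c k \<oplus> dot n (D k) Sc \<preceq> Sc k"
proof -
  assume k: "k < n"
  have "dot n (D k) Sc = dot n (\<lambda>l. dot n (D k) (\<lambda>i. S i l)) c"
    using k by (intro dot_assoc) simp_all
  then have "c k \<oplus> dot n (D k) Sc = dot n (\<lambda>l. unit_mat k l \<oplus> dot n (D k) (\<lambda>i. S i l)) c"
    using k by (simp add: dot_add_left dot_unit_mat)
  also have "\<dots> \<preceq> Sc k"
    using k by (intro dot_mono_left unfold_S) simp_all
  finally show ?thesis .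
qed

lemma block_star_unfold_first_row:
  assumes j: "j < Suc n"
  shows "unit_mat 0 j \<oplus> dot (Suc n) (block a b c D 0) (\<lambda>k. block_star n a b c S k j)
         \<preceq> block_star n a b c S 0 j"
proof -
  have unfold: "\<one> \<oplus> (a \<oplus> dot n bS c) \<otimes> fstar \<preceq> fstar"
    by (rule star_unfold_leq) simp
  show ?thesis
  proof (cases j)
    case 0
    have "unit_mat 0 0 \<oplus> dot (Suc n) (block a b c D 0) (\<lambda>k. block_star n a b c S k 0)
        = \<one> \<oplus> (a \<oplus> dot n bS c) \<otimes> fstar"
      by (subst dot_block_block_star) (simp_all add: block_star_eq unit_mat_def dot_mul_right
          block_star_assoc distrib_right)
    with unfold \<open>j = 0\<close> show ?thesis
      by (simp add: block_star_eq)
  next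
    case (Suc j')
    with j have j': "j' < n" by simp
    have "unit_mat 0 (Suc j') \<oplus> dot (Suc n) (block a b c D 0) (\<lambda>k. block_star n a b c S k (Suc j'))
        = (\<one> \<oplus> (a \<oplus> dot n bS c) \<otimes> fstar) \<otimes> bS j'"
      using j' by (subst dot_block_block_star) (simp_all add: block_star_eq unit_mat_def
          dot_add_right dot_mul_right block_star_assoc distrib_right mul_assoc add_ac)
    also have "\<dots> \<preceq> fstar \<otimes> bS j'"
      using j' unfold by (intro mul_mono_left) simp_all
    finally show ?thesis
      using \<open>j = Suc j'\<close> by (simp add: block_star_eq)
  qed
qed

lemma block_star_unfold_lower_rows:
  assumes i: "i < n" and j: "j < Suc n"
  shows "unit_mat (Suc i) j \<oplus> dot (Suc n) (block a b c D (Suc i)) (\<lambda>k. block_star n a b c S k j)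
         \<preceq> block_star n a b c S (Suc i) j"
proof (cases j)
  case 0
  have "unit_mat (Suc i) 0 \<oplus> dot (Suc n) (block a b c D (Suc i)) (\<lambda>k. block_star n a b c S k 0)
      = (c i \<oplus> dot n (D i) Sc) \<otimes> fstar"
    using i by (subst dot_block_block_star) (simp_all add: block_star_eq unit_mat_def dot_mul_right
        distrib_right)
  also have "\<dots> \<preceq> Sc i \<otimes> fstar"
    using i block_star_unfold_column by (intro mul_mono_left) simp_all
  finally show ?thesis
    using \<open>j = 0\<close> by (simp add: block_star_eq)
next
  case (Suc j')
  with j have j': "j' < n" by simp
  have "unit_mat (Suc i) (Suc j') \<oplus>
        dot (Suc n) (block a b c D (Suc i)) (\<lambda>k. block_star n a b c S k (Suc j'))
      = (unit_mat i j' \<oplus> dot n (D i) (\<lambda>k. S k j')) \<oplus> (c i \<oplus> dot n (D i) Sc) \<otimes> fstar \<otimes> bS j'"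
    using i j' by (subst dot_block_block_star) (simp_all add: block_star_eq unit_mat_def
        dot_add_right dot_mul_right distrib_right mul_assoc add_ac)
  also have "\<dots> \<preceq> S i j' \<oplus> Sc i \<otimes> fstar \<otimes> bS j'"
    using i j' block_star_unfold_column unfold_S by (intro add_mono mul_mono_left) simp_all
  finally show ?thesis
    using \<open>j = Suc j'\<close> by (simp add: block_star_eq)
qed

lemma block_star_unfold:
  "i < Suc n \<Longrightarrow> j < Suc n \<Longrightarrow>
   unit_mat i j \<oplus> dot (Suc n) (block a b c D i) (\<lambda>k. block_star n a b c S k j) \<preceq> block_star n a b c S i j"
  by (cases i) (simp_all add: block_star_unfold_first_row block_star_unfold_lower_rows)

end

context
  assumes induct_S: "\<And>y i. (\<And>k. k < n \<Longrightarrow> y k \<in> K) \<Longrightarrow> (\<And>k. k < n \<Longrightarrow> dot n (D k) y \<preceq> y k) \<Longrightarrow>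
      i < n \<Longrightarrow> dot n (S i) y \<preceq> y i"
begin

context
  fixes y0 :: 'a and y :: "nat \<Rightarrow> 'a"
  assumes y0_closed [simp]: "y0 \<in> K" and y_closed [simp]: "\<And>k. k < n \<Longrightarrow> y k \<in> K"
    and first_row: "a \<otimes> y0 \<oplus> dot n b y \<preceq> y0"
    and lower_rows: "\<And>k. k < n \<Longrightarrow> c k \<otimes> y0 \<oplus> dot n (D k) y \<preceq> y k"
begin

lemma block_star_induct_lower:
  assumes k: "k < n"
  shows "dot n (S k) y \<oplus> Sc k \<otimes> y0 \<preceq> y k"
proof -
  have Sy: "dot n (S l) y \<preceq> y l" if "l < n" for l
    using that lower_rows by (intro induct_S) (simp_all add: add_leq_iff)
  have "Sc k \<otimes> y0 = dot n (S k) (\<lambda>l. c l \<otimes> y0)"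
    using k by (simp add: dot_mul_right)
  also have "\<dots> \<preceq> dot n (S k) y"
    using k lower_rows by (intro dot_mono_right) (simp_all add: add_leq_iff)
  finally have "Sc k \<otimes> y0 \<preceq> y k"
    using Sy[OF k] by (rule leq_trans) (use k in simp_all)
  with Sy[OF k] k show ?thesis
    by (simp add: add_leq_iff)
qed

lemma block_star_induct_first:
  "fstar \<otimes> (y0 \<oplus> dot n bS y) \<preceq> y0"
proof -
  have lower: "dot n (S k) y \<preceq> y k" "Sc k \<otimes> y0 \<preceq> y k" if "k < n" for k
    using block_star_induct_lower[OF that] that by (simp_all add: add_leq_iff)
  have "(a \<oplus> dot n bS c) \<otimes> y0 = a \<otimes> y0 \<oplus> dot n b (\<lambda>k. Sc k \<otimes> y0)"
    by (simp add: distrib_right dot_mul_right block_star_assoc)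
  also have "\<dots> \<preceq> a \<otimes> y0 \<oplus> dot n b y"
    using lower by (intro add_mono dot_mono_right) simp_all
  finally have "(a \<oplus> dot n bS c) \<otimes> y0 \<preceq> y0"
    using first_row by (rule leq_trans) simp_all
  then have fstar: "fstar \<otimes> y0 \<preceq> y0"
    by (intro star_induct_leq) simp_all
  have "dot n bS y = dot n b (\<lambda>k. dot n (S k) y)"
    by (simp add: dot_assoc)
  also have "\<dots> \<preceq> dot n b y"
    using lower by (intro dot_mono_right) simp_all
  finally have "dot n bS y \<preceq> dot n b y" .
  moreover have "dot n b y \<preceq> y0"
    using first_row by (simp add: add_leq_iff)
  ultimately have "dot n bS y \<preceq> y0"
    by (rule leq_trans) simp_all
  then have "y0 \<oplus> dot n bS y = y0"
    by (simp add: leq_def add_commute)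
  with fstar show ?thesis
    by simp
qed

end

lemma block_star_induct:
  assumes y: "\<And>k. k < Suc n \<Longrightarrow> y k \<in> K"
    and hyp: "\<And>k. k < Suc n \<Longrightarrow> dot (Suc n) (block a b c D k) y \<preceq> y k"
    and i: "i < Suc n"
  shows "dot (Suc n) (block_star n a b c S i) y \<preceq> y i"
proof -
  define y' where "y' = (\<lambda>k. y (Suc k))"
  have closed [simp]: "y 0 \<in> K" "k < n \<Longrightarrow> y' k \<in> K" for k
    using y by (simp_all add: y'_def)
  have first: "a \<otimes> y 0 \<oplus> dot n b y' \<preceq> y 0"
    using hyp[of 0] y by (simp add: dot_Suc block_entries_closed y'_def)
  have lower: "c k \<otimes> y 0 \<oplus> dot n (D k) y' \<preceq> y' k" if "k < n" for k
    using hyp[of "Suc k"] y that by (simp add: dot_Suc block_entries_closed y'_def)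
  have first_solution: "fstar \<otimes> (y 0 \<oplus> dot n bS y') \<preceq> y 0"
    by (rule block_star_induct_first[OF _ _ first lower]) simp_all
  have row: "dot (Suc n) (block_star n a b c S i) y =
      block_star n a b c S i 0 \<otimes> y 0 \<oplus> dot n (\<lambda>k. block_star n a b c S i (Suc k)) y'"
    using i y by (simp add: dot_Suc block_star_closed y'_def)
  show ?thesis
  proof (cases i)
    case 0
    have "dot (Suc n) (block_star n a b c S i) y = fstar \<otimes> (y 0 \<oplus> dot n bS y')"
      unfolding row using \<open>i = 0\<close> by (simp add: block_star_eq dot_mul_left distrib_left)
    then show ?thesis
      using first_solution \<open>i = 0\<close> by simp
  next
    case (Suc i')
    with i have i': "i' < n" by simp
    have "dot (Suc n) (block_star n a b c S i) y =
        dot n (S i') y' \<oplus> Sc i' \<otimes> (fstar \<otimes> (y 0 \<oplus> dot n bS y'))"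
      unfolding row using \<open>i = Suc i'\<close> i'
      by (simp add: block_star_eq dot_add_left dot_mul_left distrib_left mul_assoc add_ac)
    also have "\<dots> \<preceq> dot n (S i') y' \<oplus> Sc i' \<otimes> y 0"
      using i' first_solution by (intro add_mono mul_mono_right) simp_all
    finally have "dot (Suc n) (block_star n a b c S i) y \<preceq> dot n (S i') y' \<oplus> Sc i' \<otimes> y 0" .
    moreover have "dot n (S i') y' \<oplus> Sc i' \<otimes> y 0 \<preceq> y' i'"
      by (rule block_star_induct_lower[OF _ _ first lower i']) simp_all
    ultimately have "dot (Suc n) (block_star n a b c S i) y \<preceq> y' i'"
      by (rule leq_trans) (use i i' y in \<open>simp_all add: block_star_closed\<close>)
    then show ?thesis
      using \<open>i = Suc i'\<close> by (simp add: y'_def)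
  qed
qed

end

end

lemma mat_star_closed:
  "(\<And>i j. i < n \<Longrightarrow> j < n \<Longrightarrow> M i j \<in> K) \<Longrightarrow> i < n \<Longrightarrow> j < n \<Longrightarrow> mat_star n M i j \<in> K"
proof (induction n arbitrary: M i j)
  case (Suc n)
  then show ?case
    unfolding mat_star_Suc by (intro block_star_closed) simp_all
qed simp

lemma mat_star_unfold:
  "(\<And>i j. i < n \<Longrightarrow> j < n \<Longrightarrow> M i j \<in> K) \<Longrightarrow> i < n \<Longrightarrow> j < n \<Longrightarrow>
   unit_mat i j \<oplus> dot n (M i) (\<lambda>k. mat_star n M k j) \<preceq> mat_star n M i j"
proof (induction n arbitrary: M i j)
  case (Suc n)
  have "unit_mat i j \<oplus> dot (Suc n) (block (M 0 0) (\<lambda>j. M 0 (Suc j)) (\<lambda>i. M (Suc i) 0) (\<lambda>i j. M (Suc i) (Suc j)) i)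
          (\<lambda>k. mat_star (Suc n) M k j) \<preceq> mat_star (Suc n) M i j"
    unfolding mat_star_Suc using Suc.prems
    by (intro block_star_unfold Suc.IH) (simp_all add: mat_star_closed)
  then show ?case
    by (simp only: block_eta)
qed simp

lemma mat_star_induct:
  "(\<And>i j. i < n \<Longrightarrow> j < n \<Longrightarrow> M i j \<in> K) \<Longrightarrow> (\<And>k. k < n \<Longrightarrow> y k \<in> K) \<Longrightarrow>
   (\<And>k. k < n \<Longrightarrow> dot n (M k) y \<preceq> y k) \<Longrightarrow> i < n \<Longrightarrow> dot n (mat_star n M i) y \<preceq> y i"
proof (induction n arbitrary: M y i)
  case (Suc n)
  have "dot (Suc n) (block_star n (M 0 0) (\<lambda>j. M 0 (Suc j)) (\<lambda>i. M (Suc i) 0)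
          (mat_star n (\<lambda>i j. M (Suc i) (Suc j))) i) y \<preceq> y i"
    using Suc.prems
    by (intro block_star_induct[where D = "\<lambda>i j. M (Suc i) (Suc j)"] Suc.IH)
      (simp_all add: mat_star_closed block_eta)
  then show ?case
    by (simp only: mat_star_Suc)
qed simp

lemma mat_star_least:
  assumes M: "\<And>i j. i < n \<Longrightarrow> j < n \<Longrightarrow> M i j \<in> K"
    and T: "\<And>i j. i < n \<Longrightarrow> j < n \<Longrightarrow> T i j \<in> K"
    and prefix: "\<And>i j. i < n \<Longrightarrow> j < n \<Longrightarrow> unit_mat i j \<oplus> dot n (M i) (\<lambda>k. T k j) \<preceq> T i j"
    and i: "i < n" and j: "j < n"
  shows "mat_star n M i j \<preceq> T i j"
proof -
  have S: "\<And>i j. i < n \<Longrightarrow> j < n \<Longrightarrow> mat_star n M i j \<in> K"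
    using M by (rule mat_star_closed)
  have "mat_star n M i j = mat_star n M i j \<otimes> \<one>"
    using S i j by simp
  also have "\<dots> \<preceq> mat_star n M i j \<otimes> T j j"
    using prefix[OF j j] M S T i j by (intro mul_mono_right) (simp_all add: unit_mat_def add_leq_iff)
  finally have "mat_star n M i j \<preceq> mat_star n M i j \<otimes> T j j" .
  moreover have "mat_star n M i j \<otimes> T j j \<preceq> dot n (mat_star n M i) (\<lambda>k. T k j)"
    unfolding dot_def using S T i j by (intro gsum_upper) simp_all
  ultimately have "mat_star n M i j \<preceq> dot n (mat_star n M i) (\<lambda>k. T k j)"
    by (rule leq_trans) (use S T i j in simp_all)
  moreover have "dot n (mat_star n M i) (\<lambda>k. T k j) \<preceq> T i j"
    using M T i j prefix by (intro mat_star_induct) (simp_all add: add_leq_iff)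
  ultimately show ?thesis
    by (rule leq_trans) (use S T i j in simp_all)
qed

end

lemma lconc_assoc: "lconc (lconc a b) c = lconc a (lconc b c)"
  unfolding lconc_def by (auto, metis append.assoc, metis append.assoc)

lemma lconc_simps [simp]:
  "lconc {[]} a = a" "lconc a {[]} = a" "lconc {} a = {}" "lconc a {} = {}" "lconc {u} {v} = {u @ v}"
  unfolding lconc_def by auto

lemma lconc_Un_left: "lconc (a \<union> b) c = lconc a c \<union> lconc b c"
  unfolding lconc_def by auto

lemma lconc_Un_right: "lconc c (a \<union> b) = lconc c a \<union> lconc c b"
  unfolding lconc_def by auto

lemma lconc_UN_left: "lconc (\<Union>i. A i) c = (\<Union>i. lconc (A i) c)"
  unfolding lconc_def by blast

lemma lconc_UN_right: "lconc c (\<Union>i. A i) = (\<Union>i. lconc c (A i))"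
  unfolding lconc_def by blast

lemma lstar_unfold: "lstar x = {[]} \<union> lconc x (lstar x)"
proof -
  have "(\<Union>n. lpow x n) = lpow x 0 \<union> (\<Union>n. lpow x (Suc n))"
  proof (intro equalityI subsetI)
    fix w assume "w \<in> (\<Union>n. lpow x n)"
    then obtain n where "w \<in> lpow x n" by blast
    then show "w \<in> lpow x 0 \<union> (\<Union>n. lpow x (Suc n))"
      by (cases n) auto
  qed (auto simp del: lpow.simps)
  then show ?thesis
    unfolding lstar_def lconc_UN_right by simp
qed

lemma RD_closed [simp]:
  "{} \<in> RD m" "{[]} \<in> RD m" "i < m \<Longrightarrow> {[P i]} \<in> RD m" "i < m \<Longrightarrow> {[Q i]} \<in> RD m"
  "a \<in> RD m \<Longrightarrow> b \<in> RD m \<Longrightarrow> a \<union> b \<in> RD m"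
  "a \<in> RD m \<Longrightarrow> b \<in> RD m \<Longrightarrow> lconc a b \<in> RD m"
  "a \<in> RD m \<Longrightarrow> lstar a \<in> RD m"
  unfolding RD_def by (auto intro: regl.intros)

lemma RD_two_letters [simp]:
  "i < m \<Longrightarrow> j < m \<Longrightarrow> {[P i, Q j]} \<in> RD m" "i < m \<Longrightarrow> j < m \<Longrightarrow> {[Q i, P j]} \<in> RD m"
  using RD_closed(6)[of "{[P i]}" m "{[Q j]}"] RD_closed(6)[of "{[Q i]}" m "{[P j]}"] by simp_all

lemma lpow_RD [simp]: "a \<in> RD m \<Longrightarrow> lpow a n \<in> RD m"
  by (induction n) auto

lemma finite_Union_RD: "finite A \<Longrightarrow> A \<subseteq> RD m \<Longrightarrow> \<Union>A \<in> RD m"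
  by (induction rule: finite_induct) auto

lemma QP_sum_RD: "{[Q i, P i] | i. i < m} \<in> RD m"
proof -
  have "{[Q i, P i] | i. i < m} = \<Union>((\<lambda>i. {[Q i, P i]}) ` {..<m})"
    by auto
  then show ?thesis
    by (auto intro: finite_Union_RD)
qed

lemma Union_setprod: "\<Union>(setprod A B) = lconc (\<Union>A) (\<Union>B)"
  unfolding setprod_def lconc_def by blast

lemma Union_setpow: "\<Union>(setpow A n) = lpow (\<Union>A) n"
  by (induction n) (auto simp: Union_setprod)

lemma Union_setstar: "\<Union>(setstar A) = lstar (\<Union>A)"
  unfolding setstar_def lstar_def by (auto simp flip: Union_setpow)

lemma setprod_RD: "A \<subseteq> RD m \<Longrightarrow> B \<subseteq> RD m \<Longrightarrow> setprod A B \<subseteq> RD m"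
  unfolding setprod_def using RD_closed(6) by blast

lemma setpow_RD: "A \<subseteq> RD m \<Longrightarrow> setpow A n \<subseteq> RD m"
  by (induction n) (auto intro: setprod_RD[THEN subsetD])

lemma ratsub_RD: "ratsub m A \<Longrightarrow> A \<subseteq> RD m"
  by (induction rule: ratsub.induct) (auto simp: setstar_def dest: setprod_RD setpow_RD)

lemma ratsub_Union_RD: "ratsub m A \<Longrightarrow> \<Union>A \<in> RD m"
  by (induction rule: ratsub.induct) (auto simp: finite_Union_RD Union_setprod Union_setstar)

lemma ratsub_singleton: "x \<in> RD m \<Longrightarrow> ratsub m {x}"
  by (rule ratsub_fin) auto

lemma ratsub_range_lpow: "x \<in> RD m \<Longrightarrow> ratsub m (range (lpow x))"
proof -
  assume "x \<in> RD m"
  moreover have "setstar {x} = range (lpow x)"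
  proof -
    have "setpow {x} n = {lpow x n}" for n
      by (induction n) (auto simp: setprod_def)
    then show ?thesis
      unfolding setstar_def by auto
  qed
  ultimately show ?thesis
    by (metis ratsub_singleton ratsub_star)
qed

lemma ratsub_range_lpow_lconc:
  "x \<in> RD m \<Longrightarrow> y \<in> RD m \<Longrightarrow> ratsub m (range (\<lambda>n. lconc (lpow x n) y))"
proof -
  assume x: "x \<in> RD m" and y: "y \<in> RD m"
  have "setprod (range (lpow x)) {y} = range (\<lambda>n. lconc (lpow x n) y)"
    unfolding setprod_def by auto
  then show ?thesis
    using ratsub_prod[OF ratsub_range_lpow[OF x] ratsub_singleton[OF y]] by simp
qed

lemma RcongI:
  assumes "\<rho> \<subseteq> RD m \<times> RD m" and "equiv (RD m) \<rho>"
    and "\<And>a b c d. (a, b) \<in> \<rho> \<Longrightarrow> (c, d) \<in> \<rho> \<Longrightarrow> (a \<union> c, b \<union> d) \<in> \<rho>"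
    and "\<And>a b c d. (a, b) \<in> \<rho> \<Longrightarrow> (c, d) \<in> \<rho> \<Longrightarrow> (lconc a c, lconc b d) \<in> \<rho>"
    and "\<And>A B. ratsub m A \<Longrightarrow> ratsub m B \<Longrightarrow> dclos m \<rho> A = dclos m \<rho> B \<Longrightarrow> (\<Union>A, \<Union>B) \<in> \<rho>"
  shows "Rcong m \<rho>"
  using assms unfolding Rcong_def by blast

lemma Rcong_total: "Rcong m (RD m \<times> RD m)"
  by (rule RcongI) (auto simp: ratsub_Union_RD equiv_def refl_on_def sym_def trans_def)

lemma gens_RD: "gens m \<subseteq> RD m \<times> RD m"
  unfolding gens_def using QP_sum_RD by auto

text \<open>\<open>(a \<union> b, b) \<in> \<rho>\<close> says that the class of \<open>a\<close> lies below that of \<open>b\<close> in the quotient order,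
  so equal downward closures amount to mutual domination (\<open>dclos_subset_iff\<close>).\<close>

definition dominated :: "(lang \<times> lang) set \<Rightarrow> lang set \<Rightarrow> lang set \<Rightarrow> bool" where
  "dominated \<rho> A B \<longleftrightarrow> (\<forall>a\<in>A. \<exists>b\<in>B. (a \<union> b, b) \<in> \<rho>)"

context
  fixes m :: nat and \<rho> :: "(lang \<times> lang) set"
  assumes equiv: "equiv (RD m) \<rho>"
    and Un_compat: "\<And>a b c d. (a, b) \<in> \<rho> \<Longrightarrow> (c, d) \<in> \<rho> \<Longrightarrow> (a \<union> c, b \<union> d) \<in> \<rho>"
begin

lemma below_trans:
  assumes xa: "(x \<union> a, a) \<in> \<rho>" and ab: "(a \<union> b, b) \<in> \<rho>" and x: "x \<in> RD m"
  shows "(x \<union> b, b) \<in> \<rho>"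
proof -
  have b: "b \<in> RD m"
    using ab equiv by (auto simp: equiv_def)
  have sym: "sym \<rho>" and trans: "trans \<rho>" and refl: "\<And>u. u \<in> RD m \<Longrightarrow> (u, u) \<in> \<rho>"
    using equiv by (auto simp: equiv_def refl_on_def)
  have "(x \<union> b, x \<union> (a \<union> b)) \<in> \<rho>"
    using Un_compat[OF refl[OF x] symD[OF sym ab]] by simp
  moreover have "(x \<union> (a \<union> b), a \<union> b) \<in> \<rho>"
    using Un_compat[OF xa refl[OF b]] by (simp add: Un_assoc)
  ultimately show ?thesis
    using ab trans by (meson transD)
qed

lemma dclos_subset_iff:
  assumes A: "A \<subseteq> RD m" and B: "B \<subseteq> RD m"
  shows "dclos m \<rho> A \<subseteq> dclos m \<rho> B \<longleftrightarrow> dominated \<rho> A B"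
proof
  assume sub: "dclos m \<rho> A \<subseteq> dclos m \<rho> B"
  show "dominated \<rho> A B"
    unfolding dominated_def
  proof
    fix a assume a: "a \<in> A"
    moreover have "(a \<union> a, a) \<in> \<rho>"
      using a A equiv by (auto simp: equiv_def refl_on_def)
    ultimately have "\<rho> `` {a} \<in> dclos m \<rho> A"
      using A unfolding dclos_def by blast
    with sub obtain x b where x: "x \<in> RD m" and b: "b \<in> B" and ax: "\<rho> `` {a} = \<rho> `` {x}"
      and xb: "(x \<union> b, b) \<in> \<rho>"
      unfolding dclos_def by blast
    have "(a, x) \<in> \<rho>"
      using eq_equiv_class_iff[OF equiv, of a x] ax a A x by blast
    then have "(a \<union> b, x \<union> b) \<in> \<rho>"
      using b B equiv by (intro Un_compat) (auto simp: equiv_def refl_on_def)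
    then have "(a \<union> b, b) \<in> \<rho>"
      using xb equiv by (meson equiv_def transD)
    with b show "\<exists>b\<in>B. (a \<union> b, b) \<in> \<rho>" ..
  qed
next
  assume dom: "dominated \<rho> A B"
  show "dclos m \<rho> A \<subseteq> dclos m \<rho> B"
  proof
    fix X assume "X \<in> dclos m \<rho> A"
    then obtain x a where X: "X = \<rho> `` {x}" and x: "x \<in> RD m" and a: "a \<in> A"
      and xa: "(x \<union> a, a) \<in> \<rho>"
      unfolding dclos_def by blast
    obtain b where "b \<in> B" and "(a \<union> b, b) \<in> \<rho>"
      using dom a unfolding dominated_def by blast
    then show "X \<in> dclos m \<rho> B"
      using below_trans[OF xa _ x] X x unfolding dclos_def by blast
  qed
qed

lemma dclos_eq_iff:
  "A \<subseteq> RD m \<Longrightarrow> B \<subseteq> RD m \<Longrightarrow> dclos m \<rho> A = dclos m \<rho> B \<longleftrightarrow> dominated \<rho> A B \<and> dominated \<rho> B A"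
  using dclos_subset_iff[of A B] dclos_subset_iff[of B A] by blast

end

lemma dominated_mono: "dominated \<rho> A B \<Longrightarrow> \<rho> \<subseteq> \<rho>' \<Longrightarrow> dominated \<rho>' A B"
  unfolding dominated_def by blast

lemma Rcong_equiv: "Rcong m \<rho> \<Longrightarrow> equiv (RD m) \<rho>"
  and Rcong_Un: "Rcong m \<rho> \<Longrightarrow> (a, b) \<in> \<rho> \<Longrightarrow> (c, d) \<in> \<rho> \<Longrightarrow> (a \<union> c, b \<union> d) \<in> \<rho>"
  and Rcong_lconc: "Rcong m \<rho> \<Longrightarrow> (a, b) \<in> \<rho> \<Longrightarrow> (c, d) \<in> \<rho> \<Longrightarrow> (lconc a c, lconc b d) \<in> \<rho>"
  unfolding Rcong_def by blast+

lemma Rcong_Union: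
  assumes R: "Rcong m \<rho>" and A: "ratsub m A" and B: "ratsub m B"
    and "dominated \<rho> A B" and "dominated \<rho> B A"
  shows "(\<Union>A, \<Union>B) \<in> \<rho>"
proof -
  have "dclos m \<rho> A = dclos m \<rho> B"
    using assms ratsub_RD[OF A] ratsub_RD[OF B] dclos_eq_iff[OF Rcong_equiv[OF R] Rcong_Un[OF R]] by blast
  then show ?thesis
    using R A B unfolding Rcong_def by blast
qed

lemma equiv_Inter: "F \<noteq> {} \<Longrightarrow> (\<And>\<rho>. \<rho> \<in> F \<Longrightarrow> equiv A \<rho>) \<Longrightarrow> equiv A (\<Inter>F)"
  unfolding equiv_def refl_on_def sym_def trans_def by (intro conjI; blast)

lemma Rcong_Inter:
  assumes nonempty: "F \<noteq> {}" and Rcong: "\<And>\<rho>. \<rho> \<in> F \<Longrightarrow> Rcong m \<rho>"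
  shows "Rcong m (\<Inter>F)"
proof (rule RcongI)
  show equiv: "equiv (RD m) (\<Inter>F)"
    using nonempty Rcong Rcong_equiv by (blast intro: equiv_Inter)
  then show "\<Inter>F \<subseteq> RD m \<times> RD m"
    by (simp add: equiv_def)
  show Un: "(a \<union> c, b \<union> d) \<in> \<Inter>F" if "(a, b) \<in> \<Inter>F" "(c, d) \<in> \<Inter>F" for a b c d
    using Rcong Rcong_Un that by blast
  show "(lconc a c, lconc b d) \<in> \<Inter>F" if "(a, b) \<in> \<Inter>F" "(c, d) \<in> \<Inter>F" for a b c d
    using Rcong Rcong_lconc that by blast
  show "(\<Union>A, \<Union>B) \<in> \<Inter>F"
    if A: "ratsub m A" and B: "ratsub m B" and eq: "dclos m (\<Inter>F) A = dclos m (\<Inter>F) B" for A B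
  proof -
    have AB: "dominated (\<Inter>F) A B" and BA: "dominated (\<Inter>F) B A"
      using eq dclos_eq_iff[OF equiv Un ratsub_RD[OF A] ratsub_RD[OF B]] by simp_all
    show ?thesis
    proof
      fix \<rho> assume "\<rho> \<in> F"
      with AB BA show "(\<Union>A, \<Union>B) \<in> \<rho>"
        by (intro Rcong_Union[OF Rcong A B]) (auto intro: dominated_mono)
    qed
  qed
qed

lemma Rcong_rho: "Rcong m (rho m)"
  unfolding rho_def using Rcong_total gens_RD by (intro Rcong_Inter) auto

lemma gens_subset_rho: "gens m \<subseteq> rho m"
  unfolding rho_def by blast

lemma rho_equiv: "equiv (RD m) (rho m)"
  by (rule Rcong_equiv[OF Rcong_rho])

lemma rho_RD: "(a, b) \<in> rho m \<Longrightarrow> a \<in> RD m \<and> b \<in> RD m"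
  using rho_equiv unfolding equiv_def by blast

lemma rho_refl: "x \<in> RD m \<Longrightarrow> (x, x) \<in> rho m"
  using rho_equiv unfolding equiv_def refl_on_def by blast

lemma rho_sym: "(x, y) \<in> rho m \<Longrightarrow> (y, x) \<in> rho m"
  using rho_equiv unfolding equiv_def sym_def by blast

lemma rho_trans: "(x, y) \<in> rho m \<Longrightarrow> (y, w) \<in> rho m \<Longrightarrow> (x, w) \<in> rho m"
  using rho_equiv unfolding equiv_def trans_def by blast

lemmas rho_Un = Rcong_Un[OF Rcong_rho]
  and rho_lconc = Rcong_lconc[OF Rcong_rho]
  and rho_Union = Rcong_Union[OF Rcong_rho]

lemma rho_below_of_eq: "(a, b) \<in> rho m \<Longrightarrow> (a \<union> b, b) \<in> rho m"
  using rho_Un[of a b m b b] rho_refl rho_RD by fastforce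

lemma rho_lpow: "(x, y) \<in> rho m \<Longrightarrow> (lpow x n, lpow y n) \<in> rho m"
  by (induction n) (auto intro: rho_refl rho_lconc)

lemma rho_lstar: "(x, y) \<in> rho m \<Longrightarrow> (lstar x, lstar y) \<in> rho m"
proof -
  assume xy: "(x, y) \<in> rho m"
  then have "dominated (rho m) (range (lpow x)) (range (lpow y))"
    "dominated (rho m) (range (lpow y)) (range (lpow x))"
    unfolding dominated_def using rho_below_of_eq rho_lpow rho_sym by blast+
  then show ?thesis
    unfolding lstar_def using rho_Union ratsub_range_lpow rho_RD[OF xy] by blast
qed

lemma rho_lstar_induct:
  assumes x: "x \<in> RD m" and y: "y \<in> RD m" and xy: "(lconc x y \<union> y, y) \<in> rho m"
  shows "(lconc (lstar x) y \<union> y, y) \<in> rho m"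
proof -
  have lpow: "(lconc (lpow x n) y \<union> y, y) \<in> rho m" for n
  proof (induction n)
    case 0
    show ?case
      using y by (simp add: rho_refl)
  next
    case (Suc n)
    define u where "u = lconc (lpow x n) y"
    have u: "u \<in> RD m"
      using x y by (simp add: u_def)
    have "(lconc x u \<union> y, lconc x u \<union> (lconc x y \<union> y)) \<in> rho m"
      using rho_Un[OF rho_refl rho_sym[OF xy]] x u by simp
    moreover have "(lconc x u \<union> (lconc x y \<union> y), lconc x y \<union> y) \<in> rho m"
      using rho_Un[OF rho_lconc[OF rho_refl[OF x] Suc[folded u_def]] rho_refl[OF y]]
      by (simp add: lconc_Un_right Un_assoc)
    ultimately have "(lconc x u \<union> y, y) \<in> rho m"
      using xy by (blast intro: rho_trans)
    then show ?case
      by (simp add: u_def lconc_assoc)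
  qed
  have "dominated (rho m) (range (\<lambda>n. lconc (lpow x n) y)) {y}"
    using lpow unfolding dominated_def by blast
  moreover have "dominated (rho m) {y} (range (\<lambda>n. lconc (lpow x n) y))"
    unfolding dominated_def using y by (auto intro!: exI[of _ 0] rho_refl)
  ultimately have "(\<Union>n. lconc (lpow x n) y, \<Union>{y}) \<in> rho m"
    using rho_Union ratsub_range_lpow_lconc[OF x y] ratsub_singleton[OF y] by blast
  then show ?thesis
    unfolding lstar_def lconc_UN_left by (simp add: rho_below_of_eq)
qed

abbreviation cl :: "nat \<Rightarrow> lang \<Rightarrow> cls" where
  "cl m x \<equiv> rho m `` {x}"

lemma C_cases: "X \<in> C m \<Longrightarrow> (\<And>x. X = cl m x \<Longrightarrow> x \<in> RD m \<Longrightarrow> thesis) \<Longrightarrow> thesis"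
  unfolding C_def by (erule quotientE)

lemma cl_in_C [simp]: "x \<in> RD m \<Longrightarrow> cl m x \<in> C m"
  unfolding C_def by (rule quotientI)

lemma cl_eq_iff: "x \<in> RD m \<Longrightarrow> y \<in> RD m \<Longrightarrow> cl m x = cl m y \<longleftrightarrow> (x, y) \<in> rho m"
  using eq_equiv_class_iff[OF rho_equiv] by blast

lemma cl_eqI: "(x, y) \<in> rho m \<Longrightarrow> cl m x = cl m y"
  using equiv_class_eq[OF rho_equiv] by blast

lemma UN_cl_const:
  assumes "x \<in> RD m" and "\<And>x'. (x, x') \<in> rho m \<Longrightarrow> f x' = cl m (g x)"
  shows "(\<Union>x'\<in>cl m x. f x') = cl m (g x)"
proof -
  have "cl m x \<noteq> {}"
    using rho_refl[OF assms(1)] by blast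
  moreover have "(\<Union>x'\<in>cl m x. f x') = (\<Union>x'\<in>cl m x. cl m (g x))"
    using assms(2) by (intro SUP_cong) auto
  ultimately show ?thesis
    by simp
qed

lemma cadd_cl [simp]: "x \<in> RD m \<Longrightarrow> y \<in> RD m \<Longrightarrow> cadd m (cl m x) (cl m y) = cl m (x \<union> y)"
  unfolding cadd_def by (intro UN_cl_const cl_eqI[symmetric] rho_Un) (auto simp: rho_sym)

lemma cmul_cl [simp]: "x \<in> RD m \<Longrightarrow> y \<in> RD m \<Longrightarrow> cmul m (cl m x) (cl m y) = cl m (lconc x y)"
  unfolding cmul_def by (intro UN_cl_const cl_eqI[symmetric] rho_lconc) (auto simp: rho_sym)

lemma cstar_cl [simp]: "x \<in> RD m \<Longrightarrow> cstar m (cl m x) = cl m (lstar x)"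
  unfolding cstar_def by (intro UN_cl_const cl_eqI[symmetric] rho_lstar) (auto simp: rho_sym)

lemma czero_cl: "czero m = cl m {}" and cone_cl: "cone m = cl m {[]}"
  by (simp_all add: czero_def cone_def)

lemma left_kleene_algebra_on_C: "left_kleene_algebra_on (C m) (cadd m) (cmul m) (cstar m) (czero m) (cone m)"
proof unfold_locales
  fix x y assume "x \<in> C m" "y \<in> C m"
  then show "cadd m (cmul m x y) y = y \<Longrightarrow> cadd m (cmul m (cstar m x) y) y = y"
    by (elim C_cases) (simp add: cl_eq_iff rho_lstar_induct)
next
  fix x assume "x \<in> C m"
  then show "cadd m (cadd m (cone m) (cmul m x (cstar m x))) (cstar m x) = cstar m x"
    by (elim C_cases) (simp add: cone_cl lstar_unfold[symmetric, simplified])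
qed ((elim C_cases)?; simp add: czero_cl cone_cl Un_ac lconc_assoc lconc_Un_left lconc_Un_right)+

interpretation C: left_kleene_algebra_on "C m" "cadd m" "cmul m" "cstar m" "czero m" "cone m" for m
  by (rule left_kleene_algebra_on_C)

definition p_cls :: "nat \<Rightarrow> nat \<Rightarrow> cls" where
  "p_cls m i = cl m {[P i]}"

definition q_cls :: "nat \<Rightarrow> nat \<Rightarrow> cls" where
  "q_cls m i = cl m {[Q i]}"

lemma p_cls_C [simp]: "i < m \<Longrightarrow> p_cls m i \<in> C m"
  and q_cls_C [simp]: "i < m \<Longrightarrow> q_cls m i \<in> C m"
  by (simp_all add: p_cls_def q_cls_def)

lemma p_q_cls: "i < m \<Longrightarrow> j < m \<Longrightarrow> cmul m (p_cls m i) (q_cls m j) = C.unit_mat m i j"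
proof -
  assume "i < m" "j < m"
  then have "({[P i, Q j]}, if i = j then {[]} else {}) \<in> rho m"
    using gens_subset_rho unfolding gens_def by blast
  then show ?thesis
    using \<open>i < m\<close> \<open>j < m\<close> unfolding C.unit_mat_def
    by (cases "i = j") (simp_all add: p_cls_def q_cls_def czero_cl cone_cl cl_eqI)
qed

lemma gsum_cl: "(\<And>i. i < n \<Longrightarrow> f i \<in> RD m) \<Longrightarrow> C.ksum m (\<lambda>i. cl m (f i)) n = cl m (\<Union>i<n. f i)"
proof (induction n)
  case 0
  then show ?case
    by (simp add: czero_cl)
next
  case (Suc n)
  have "(\<Union>i<n. f i) \<in> RD m"
    using Suc.prems by (intro finite_Union_RD) auto
  then show ?case
    using Suc by (simp add: lessThan_Suc Un_commute)
qed

lemma dot_q_p_cls: "C.dot m m (q_cls m) (p_cls m) = cone m"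
proof -
  have "C.dot m m (q_cls m) (p_cls m) = C.ksum m (\<lambda>i. cl m {[Q i, P i]}) m"
    unfolding C.dot_def by (rule gsum_cong) (simp add: p_cls_def q_cls_def)
  also have "\<dots> = cl m (\<Union>i<m. {[Q i, P i]})"
    by (rule gsum_cl) simp
  also have "(\<Union>i<m. {[Q i, P i]}) = {[Q i, P i] | i. i < m}"
    by blast
  also have "cl m {[Q i, P i] | i. i < m} = cone m"
    using gens_subset_rho[of m] unfolding gens_def cone_cl by (intro cl_eqI) blast
  finally show ?thesis .
qed

lemma mext_apply [simp]: "i < m \<Longrightarrow> j < m \<Longrightarrow> mext m M i j = M i j"
  by (simp add: mext_def)

lemma mext_cong: "(\<And>i j. i < m \<Longrightarrow> j < m \<Longrightarrow> M i j = N i j) \<Longrightarrow> mext m M = mext m N"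
  by (simp add: mext_def fun_eq_iff)

lemma mext_MatC: "(\<And>i j. i < m \<Longrightarrow> j < m \<Longrightarrow> M i j \<in> C m) \<Longrightarrow> mext m M \<in> MatC m"
  by (simp add: mext_def MatC_def)

lemma MatC_mext: "M \<in> MatC m \<Longrightarrow> mext m M = M"
  by (auto simp: mext_def MatC_def fun_eq_iff)

lemma MatC_C: "M \<in> MatC m \<Longrightarrow> i < m \<Longrightarrow> j < m \<Longrightarrow> M i j \<in> C m"
  by (simp add: MatC_def)

definition to_mat :: "nat \<Rightarrow> cls \<Rightarrow> cmat" where
  "to_mat m x = mext m (\<lambda>i j. cmul m (cmul m (p_cls m i) x) (q_cls m j))"

definition from_mat :: "nat \<Rightarrow> cmat \<Rightarrow> cls" where
  "from_mat m M = C.dot m m (q_cls m) (\<lambda>i. C.dot m m (M i) (p_cls m))"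

lemma to_mat_apply:
  "i < m \<Longrightarrow> j < m \<Longrightarrow> to_mat m x i j = cmul m (cmul m (p_cls m i) x) (q_cls m j)"
  by (simp add: to_mat_def)

lemma to_mat_MatC: "x \<in> C m \<Longrightarrow> to_mat m x \<in> MatC m"
  unfolding to_mat_def by (rule mext_MatC) simp

lemma from_mat_C: "M \<in> MatC m \<Longrightarrow> from_mat m M \<in> C m"
  unfolding from_mat_def by (simp add: MatC_C)

lemma from_mat_to_mat: "x \<in> C m \<Longrightarrow> from_mat m (to_mat m x) = x"
proof -
  assume x: "x \<in> C m"
  have "C.dot m m (to_mat m x i) (p_cls m) = cmul m (p_cls m i) x" if "i < m" for i
  proof -
    have "C.dot m m (to_mat m x i) (p_cls m) = C.dot m m (\<lambda>j. cmul m (cmul m (p_cls m i) x) (q_cls m j)) (p_cls m)"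
      using that by (intro C.dot_cong) (simp_all add: to_mat_apply)
    also have "\<dots> = cmul m (p_cls m i) x"
      using that x by (simp add: C.dot_mul_left dot_q_p_cls)
    finally show ?thesis .
  qed
  then have "from_mat m (to_mat m x) = C.dot m m (q_cls m) (\<lambda>i. cmul m (p_cls m i) x)"
    unfolding from_mat_def by (intro C.dot_cong) simp_all
  also have "\<dots> = x"
    using x by (simp add: C.dot_mul_right dot_q_p_cls)
  finally show ?thesis .
qed

lemma to_mat_from_mat: "M \<in> MatC m \<Longrightarrow> to_mat m (from_mat m M) = M"
proof -
  assume M: "M \<in> MatC m"
  have MC: "\<And>i j. i < m \<Longrightarrow> j < m \<Longrightarrow> M i j \<in> C m"
    using M by (rule MatC_C)
  have "cmul m (cmul m (p_cls m k) (from_mat m M)) (q_cls m l) = M k l" if k: "k < m" and l: "l < m" for k l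
  proof -
    have "cmul m (p_cls m k) (from_mat m M) = C.dot m m (C.unit_mat m k) (\<lambda>i. C.dot m m (M i) (p_cls m))"
      unfolding from_mat_def using k MC
      by (simp add: C.dot_mul_left[symmetric] p_q_cls cong: C.dot_cong)
    also have "\<dots> = C.dot m m (M k) (p_cls m)"
      using k MC by (simp add: C.dot_unit_mat)
    finally have "cmul m (cmul m (p_cls m k) (from_mat m M)) (q_cls m l)
        = C.dot m m (M k) (\<lambda>j. C.unit_mat m j l)"
      using k l MC by (simp add: C.dot_mul_right[symmetric] p_q_cls cong: C.dot_cong)
    also have "\<dots> = M k l"
      using k l MC by (simp add: C.dot_unit_mat_right)
    finally show ?thesis .
  qed
  then have "to_mat m (from_mat m M) = mext m M"
    unfolding to_mat_def by (rule mext_cong)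
  then show ?thesis
    using M by (simp add: MatC_mext)
qed

lemma bij_betw_to_mat: "bij_betw (to_mat m) (C m) (MatC m)"
  by (rule bij_betw_byWitness[where f' = "from_mat m"])
    (auto simp: from_mat_to_mat to_mat_from_mat to_mat_MatC from_mat_C)

lemma to_mat_zero: "to_mat m (czero m) = mzero m"
  unfolding to_mat_def mzero_def by (rule mext_cong) simp

lemma to_mat_one: "to_mat m (cone m) = mone m"
  unfolding to_mat_def mone_def by (rule mext_cong) (simp add: p_q_cls C.unit_mat_def)

lemma to_mat_add: "x \<in> C m \<Longrightarrow> y \<in> C m \<Longrightarrow> to_mat m (cadd m x y) = madd m (to_mat m x) (to_mat m y)"
  unfolding madd_def to_mat_def by (rule mext_cong) (simp add: C.distrib_left C.distrib_right)

lemma mmul_eq_dot: "mmul m M N = mext m (\<lambda>i j. C.dot m m (M i) (\<lambda>k. N k j))"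
  by (simp add: mmul_def C.dot_def)

lemma to_mat_mul: "x \<in> C m \<Longrightarrow> y \<in> C m \<Longrightarrow> to_mat m (cmul m x y) = mmul m (to_mat m x) (to_mat m y)"
  unfolding mmul_eq_dot
proof (subst to_mat_def, rule mext_cong)
  fix i j assume x: "x \<in> C m" and y: "y \<in> C m" and i: "i < m" and j: "j < m"
  have "cmul m (cmul m (p_cls m i) (cmul m x y)) (q_cls m j)
      = cmul m (cmul m (p_cls m i) x) (cmul m (C.dot m m (q_cls m) (p_cls m)) (cmul m y (q_cls m j)))"
    using x y i j by (simp add: dot_q_p_cls C.mul_assoc)
  also have "\<dots> = C.dot m m (\<lambda>k. cmul m (cmul m (p_cls m i) x) (q_cls m k))
      (\<lambda>k. cmul m (cmul m (p_cls m k) y) (q_cls m j))"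
    using x y i j by (simp add: C.dot_mul_left C.dot_mul_right C.mul_assoc)
  also have "\<dots> = C.dot m m (to_mat m x i) (\<lambda>k. to_mat m y k j)"
    using i j by (intro C.dot_cong) (simp_all add: to_mat_apply)
  finally show "cmul m (cmul m (p_cls m i) (cmul m x y)) (q_cls m j) = C.dot m m (to_mat m x i) (\<lambda>k. to_mat m y k j)" .
qed

lemma mext_eq_iff: "mext m M = mext m N \<longleftrightarrow> (\<forall>i<m. \<forall>j<m. M i j = N i j)"
  by (auto simp: mext_def fun_eq_iff)

lemma to_mat_leq_iff:
  assumes x: "x \<in> C m" and y: "y \<in> C m"
  shows "C.leq m x y \<longleftrightarrow> (\<forall>i<m. \<forall>j<m. C.leq m (to_mat m x i j) (to_mat m y i j))"
proof -
  have "C.leq m x y \<longleftrightarrow> to_mat m (cadd m x y) = to_mat m y"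
    unfolding C.leq_def using x y inj_on_eq_iff[OF bij_betw_imp_inj_on[OF bij_betw_to_mat[of m]]]
    by simp
  also have "\<dots> \<longleftrightarrow> madd m (to_mat m x) (to_mat m y) = mext m (to_mat m y)"
    using x y by (simp add: to_mat_add MatC_mext to_mat_MatC)
  also have "\<dots> \<longleftrightarrow> (\<forall>i<m. \<forall>j<m. C.leq m (to_mat m x i j) (to_mat m y i j))"
    unfolding madd_def mext_eq_iff C.leq_def by simp
  finally show ?thesis .
qed

lemma to_mat_one_add_mul_apply:
  "x \<in> C m \<Longrightarrow> s \<in> C m \<Longrightarrow> i < m \<Longrightarrow> j < m \<Longrightarrow>
   to_mat m (cadd m (cone m) (cmul m x s)) i j =
   cadd m (C.unit_mat m i j) (C.dot m m (to_mat m x i) (\<lambda>k. to_mat m s k j))"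
  by (simp add: to_mat_add to_mat_one to_mat_mul madd_def mone_def mmul_eq_dot C.unit_mat_def)

lemma to_mat_star_leq_mat_star:
  assumes x: "x \<in> C m" and i: "i < m" and j: "j < m"
  shows "C.leq m (to_mat m (cstar m x) i j) (C.mat_star m m (to_mat m x) i j)"
proof -
  let ?S = "C.mat_star m m (to_mat m x)"
  have S: "mext m ?S \<in> MatC m"
    using x by (intro mext_MatC C.mat_star_closed) (simp_all add: to_mat_MatC MatC_C)
  define s where "s = from_mat m (mext m ?S)"
  have s: "s \<in> C m" and to_mat_s: "to_mat m s = mext m ?S"
    using S by (simp_all add: s_def from_mat_C to_mat_from_mat)
  have "C.leq m (to_mat m (cadd m (cone m) (cmul m x s)) k l) (to_mat m s k l)" if "k < m" "l < m" for k l
  proof -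
    have "C.dot m m (to_mat m x k) (\<lambda>k'. to_mat m s k' l) = C.dot m m (to_mat m x k) (\<lambda>k'. ?S k' l)"
      unfolding to_mat_s using that by (intro C.dot_cong) simp_all
    moreover have "C.leq m (cadd m (C.unit_mat m k l) (C.dot m m (to_mat m x k) (\<lambda>k'. ?S k' l))) (?S k l)"
      using x that by (intro C.mat_star_unfold) (simp_all add: to_mat_MatC MatC_C)
    ultimately show ?thesis
      using x s that by (simp add: to_mat_one_add_mul_apply to_mat_s)
  qed
  then have "C.leq m (cadd m (cone m) (cmul m x s)) s"
    using x s by (simp add: to_mat_leq_iff)
  then have "C.leq m (cstar m x) s"
    using x s by (intro C.star_least) simp_all
  then show ?thesis
    using x s i j by (simp add: to_mat_leq_iff to_mat_s)
qed

lemma mat_star_leq_to_mat_star: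
  assumes x: "x \<in> C m" and i: "i < m" and j: "j < m"
  shows "C.leq m (C.mat_star m m (to_mat m x) i j) (to_mat m (cstar m x) i j)"
proof (rule C.mat_star_least)
  show "C.leq m (cadd m (C.unit_mat m i j) (C.dot m m (to_mat m x i) (\<lambda>k. to_mat m (cstar m x) k j)))
      (to_mat m (cstar m x) i j)" if "i < m" "j < m" for i j
    using C.star_unfold_leq[OF x] x that
    by (simp add: to_mat_leq_iff flip: to_mat_one_add_mul_apply)
qed (use x i j in \<open>simp_all add: to_mat_MatC MatC_C\<close>)

lemma to_mat_star: "x \<in> C m \<Longrightarrow> to_mat m (cstar m x) = mstar m (to_mat m x)"
proof -
  assume x: "x \<in> C m"
  have "to_mat m (cstar m x) = mext m (to_mat m (cstar m x))"
    using x by (simp add: MatC_mext to_mat_MatC)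
  also have "\<dots> = mext m (C.mat_star m m (to_mat m x))"
    using x to_mat_star_leq_mat_star mat_star_leq_to_mat_star
    by (intro mext_cong C.leq_antisym[of m]) (simp_all add: to_mat_MatC MatC_C C.mat_star_closed)
  finally show ?thesis
    unfolding mstar_def .
qed

theorem theorem11:
  fixes m :: nat
  assumes "0 < m"
  shows "\<exists>h. KA_iso m h"
proof -
  have "KA_iso m (to_mat m)"
    unfolding KA_iso_def
    using bij_betw_to_mat to_mat_zero to_mat_one to_mat_add to_mat_mul to_mat_star by blast
  then show ?thesis
    by blast
qed

end
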